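(* Let $L$ be even and consider spin-1 degrees of freedom on the sites $\boldsymbol r$ of the $D$-dimensional hypercubic lattice $(\mathbb{Z}/L\mathbb{Z})^D$ with periodic boundary conditions. Let $$H^{(x)}=J\sum_{\langle\boldsymbol r,\boldsymbol r'\rangle}(S^x_{\boldsymbol r}S^x_{\boldsymbol r'}+S^y_{\boldsymbol r}S^y_{\boldsymbol r'})+h\sum_{\boldsymbol r}S^z_{\boldsymbol r}+\Delta\sum_{\boldsymbol r}(S^z_{\boldsymbol r})^2,$$ with real $J,h,\Delta$, the first sum over nearest-neighbour pairs, and let $\mathcal{P}^{(x)}=\sum_{\boldsymbol r}(-1)^{r_1+\cdots+r_D}(S^+_{\boldsymbol r})^2$. Let $\ket\Omega=\ket{-\,-\cdots-}$ be the state with $S^z_{\boldsymbol r}=-1$ on every site. Then (i) $H^{(x)}\ket\Omega=(\Delta-h)L^D\ket\Omega$; (ii) $[H^{(x)},\mathcal{P}^{(x)}]\ket\Omega=2h\,\mathcal{P}^{(x)}\ket\Omega$; (iii) $[[H^{(x)},\mathcal{P}^{(x)}],\mathcal{P}^{(x)}]=0$. Consequently $H^{(x)}(\mathcal{P}^{(x)})^n\ket\Omega=\big(h(2n-L^D)+\Delta L^D\big)(\mathcal{P}^{(x)})^n\ket\Omega$ for all $n\ge0$.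
   Context: $S^x,S^y,S^z$ are the spin-1 matrices acting on a site, $S^\pm=S^x\pm iS^y$; the local basis states are labelled $+,0,-$ by their $S^z$ eigenvalue. $\boldsymbol r=(r_1,\dots,r_D)$. *)

theory Defs
  imports Complex_Main
begin

definition sites :: "nat \<Rightarrow> nat \<Rightarrow> nat list set" where
  "sites L D = {r. length r = D \<and> (\<forall>i<D. r ! i < L)}"

definition adjacent :: "nat \<Rightarrow> nat \<Rightarrow> nat list \<Rightarrow> nat list \<Rightarrow> bool" where
  "adjacent L D r r' \<longleftrightarrow> (\<exists>\<mu><D. (\<forall>\<nu><D. \<nu> \<noteq> \<mu> \<longrightarrow> r ! \<nu> = r' ! \<nu>) \<and>
       (r' ! \<mu> = (r ! \<mu> + 1) mod L \<or> r ! \<mu> = (r' ! \<mu> + 1) mod L))"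

text \<open>Basis configurations: an S^z eigenvalue in {-1,0,1} on every site (extensional).\<close>
type_synonym cfg = "nat list \<Rightarrow> int"
type_synonym state = "cfg \<Rightarrow> complex"
type_synonym oper = "state \<Rightarrow> state"

definition configs :: "nat \<Rightarrow> nat \<Rightarrow> cfg set" where
  "configs L D = {\<sigma>. (\<forall>r\<in>sites L D. \<sigma> r \<in> {-1, 0, 1}) \<and> (\<forall>r. r \<notin> sites L D \<longrightarrow> \<sigma> r = 0)}"

text \<open>Single-site spin-1 matrices in the basis +,0,-; entry (m, m') = <m| S |m'>.\<close>
definition Sx :: "int \<Rightarrow> int \<Rightarrow> complex" where
  "Sx m m' = (if m \<in> {-1,0,1} \<and> m' \<in> {-1,0,1} \<and> \<bar>m - m'\<bar> = 1
              then complex_of_real (1 / sqrt 2) else 0)"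

definition Sy :: "int \<Rightarrow> int \<Rightarrow> complex" where
  "Sy m m' = (if m \<in> {-1,0,1} \<and> m' \<in> {-1,0,1} \<and> m = m' + 1
                then - \<i> * complex_of_real (1 / sqrt 2)
              else if m \<in> {-1,0,1} \<and> m' \<in> {-1,0,1} \<and> m' = m + 1
                then \<i> * complex_of_real (1 / sqrt 2)
              else 0)"

definition Sz :: "int \<Rightarrow> int \<Rightarrow> complex" where
  "Sz m m' = (if m = m' \<and> m \<in> {-1,0,1} then of_int m else 0)"

definition Splus :: "int \<Rightarrow> int \<Rightarrow> complex" where
  "Splus m m' = Sx m m' + \<i> * Sy m m'"

definition mat_op :: "nat \<Rightarrow> nat \<Rightarrow> (cfg \<Rightarrow> cfg \<Rightarrow> complex) \<Rightarrow> oper" where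
  "mat_op L D M \<psi> = (\<lambda>\<sigma>. if \<sigma> \<in> configs L D then (\<Sum>\<tau>\<in>configs L D. M \<sigma> \<tau> * \<psi> \<tau>) else 0)"

definition site_op :: "nat \<Rightarrow> nat \<Rightarrow> nat list \<Rightarrow> (int \<Rightarrow> int \<Rightarrow> complex) \<Rightarrow> oper" where
  "site_op L D r s = mat_op L D (\<lambda>\<sigma> \<tau>. s (\<sigma> r) (\<tau> r) * (if \<forall>q. q \<noteq> r \<longrightarrow> \<sigma> q = \<tau> q then 1 else 0))"

text \<open>H^(x). The sum over nearest-neighbour pairs <r,r'> (each unordered pair once) is
  written as half the sum over ordered adjacent pairs.\<close>
definition Hx :: "nat \<Rightarrow> nat \<Rightarrow> real \<Rightarrow> real \<Rightarrow> real \<Rightarrow> oper" where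
  "Hx L D J h Delta \<psi> = (\<lambda>\<sigma>.
      complex_of_real J * (1/2) * (\<Sum>r\<in>sites L D. \<Sum>r'\<in>{r'\<in>sites L D. adjacent L D r r'}.
          site_op L D r Sx (site_op L D r' Sx \<psi>) \<sigma> + site_op L D r Sy (site_op L D r' Sy \<psi>) \<sigma>)
    + complex_of_real h * (\<Sum>r\<in>sites L D. site_op L D r Sz \<psi> \<sigma>)
    + complex_of_real Delta * (\<Sum>r\<in>sites L D. site_op L D r Sz (site_op L D r Sz \<psi>) \<sigma>))"

definition Px :: "nat \<Rightarrow> nat \<Rightarrow> oper" where
  "Px L D \<psi> = (\<lambda>\<sigma>. \<Sum>r\<in>sites L D. (-1) ^ (sum_list r) * site_op L D r Splus (site_op L D r Splus \<psi>) \<sigma>)"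

definition commutator :: "oper \<Rightarrow> oper \<Rightarrow> oper" where
  "commutator A B \<psi> = (\<lambda>\<sigma>. A (B \<psi>) \<sigma> - B (A \<psi>) \<sigma>)"

definition Omega :: "nat \<Rightarrow> nat \<Rightarrow> state" where
  "Omega L D = (\<lambda>\<sigma>. if \<sigma> = (\<lambda>r. if r \<in> sites L D then -1 else 0) then 1 else 0)"

end

theory Submission
  imports Defs
begin

text \<open>
  Write \<open>P\<close> for the staggered sum of the single-site operators \<open>(S\<^sup>+)\<^sup>2\<close> and
  \<open>K = [S\<^sup>x, (S\<^sup>+)\<^sup>2]\<close>. On spin 1, \<open>(S\<^sup>+)\<^sup>2\<close> raises \<open>S\<^sup>z\<close> by 2 and commutes with \<open>(S\<^sup>z)\<^sup>2\<close>,
  \<open>S\<^sup>+\<close> and \<open>K\<close>, while \<open>[S\<^sup>y, (S\<^sup>+)\<^sup>2] = i K\<close>. Hence the Zeeman term contributes \<open>2h P\<close> to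
  \<open>[H, P]\<close>, the anisotropy term nothing, and a bond \<open>{r, r'}\<close> of the hopping term contributes
  \<open>(-1)^r K(r) S\<^sup>+(r') + (-1)^r' K(r') S\<^sup>+(r)\<close>, which commutes with \<open>P\<close> again; so
  \<open>[[H, P], P] = 0\<close>. On the all-down state both halves of a bond produce the same state, and
  for even \<open>L\<close> neighbouring sites carry opposite signs, so the hopping part of \<open>[H, P] \<Omega>\<close>
  cancels. As \<open>[H, P]\<close> commutes with \<open>P\<close>, every application of \<open>P\<close> to the eigenvector \<open>\<Omega>\<close>
  raises the energy by \<open>2h\<close>.
\<close>

section \<open>Linear operators and commutators\<close>

definition linear_op :: "oper \<Rightarrow> bool" where
  "linear_op A \<longleftrightarrow> (\<forall>\<psi> \<phi>. A (\<lambda>\<sigma>. \<psi> \<sigma> + \<phi> \<sigma>) = (\<lambda>\<sigma>. A \<psi> \<sigma> + A \<phi> \<sigma>)) \<and>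
     (\<forall>c \<psi>. A (\<lambda>\<sigma>. c * \<psi> \<sigma>) = (\<lambda>\<sigma>. c * A \<psi> \<sigma>))"

lemma linear_op_add: "linear_op A \<Longrightarrow> A (\<lambda>\<sigma>. \<psi> \<sigma> + \<phi> \<sigma>) = (\<lambda>\<sigma>. A \<psi> \<sigma> + A \<phi> \<sigma>)"
  by (simp add: linear_op_def)

lemma linear_op_scale: "linear_op A \<Longrightarrow> A (\<lambda>\<sigma>. c * \<psi> \<sigma>) = (\<lambda>\<sigma>. c * A \<psi> \<sigma>)"
  by (simp add: linear_op_def)

lemma linear_op_zero: "linear_op A \<Longrightarrow> A (\<lambda>\<sigma>. 0) = (\<lambda>\<sigma>. 0)"
  using linear_op_scale[of A 0 "\<lambda>\<sigma>. 0"] by simp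

lemma linear_op_diff: "linear_op A \<Longrightarrow> A (\<lambda>\<sigma>. \<psi> \<sigma> - \<phi> \<sigma>) = (\<lambda>\<sigma>. A \<psi> \<sigma> - A \<phi> \<sigma>)"
  using linear_op_add[of A \<psi> "\<lambda>\<sigma>. (-1) * \<phi> \<sigma>"] linear_op_scale[of A "-1" \<phi>] by simp

lemma linear_op_sum:
  "linear_op A \<Longrightarrow> A (\<lambda>\<sigma>. \<Sum>i\<in>I. c i * \<psi> i \<sigma>) = (\<lambda>\<sigma>. \<Sum>i\<in>I. c i * A (\<psi> i) \<sigma>)"
proof (induction I rule: infinite_finite_induct)
  case (insert i I)
  then show ?case
    using linear_op_add[OF insert.prems, of "\<lambda>\<sigma>. c i * \<psi> i \<sigma>" "\<lambda>\<sigma>. \<Sum>i\<in>I. c i * \<psi> i \<sigma>"]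
    by (simp add: linear_op_scale)
qed (simp_all add: linear_op_zero)

lemma linear_op_sum_ops:
  "(\<And>i. i \<in> I \<Longrightarrow> linear_op (T i)) \<Longrightarrow> linear_op (\<lambda>\<psi> \<sigma>. \<Sum>i\<in>I. c i * T i \<psi> \<sigma>)"
  by (simp add: linear_op_def algebra_simps sum.distrib sum_distrib_left)

lemma commutator_add_left:
  "linear_op C \<Longrightarrow> commutator (\<lambda>\<psi> \<sigma>. A \<psi> \<sigma> + B \<psi> \<sigma>) C =
    (\<lambda>\<psi> \<sigma>. commutator A C \<psi> \<sigma> + commutator B C \<psi> \<sigma>)"
  by (simp add: commutator_def fun_eq_iff linear_op_add)

lemma commutator_scale_left:
  "linear_op C \<Longrightarrow> commutator (\<lambda>\<psi> \<sigma>. c * A \<psi> \<sigma>) C = (\<lambda>\<psi> \<sigma>. c * commutator A C \<psi> \<sigma>)"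
  by (simp add: commutator_def fun_eq_iff linear_op_scale right_diff_distrib)

lemma commutator_comp_left:
  "linear_op A \<Longrightarrow> commutator (\<lambda>\<psi>. A (B \<psi>)) C =
    (\<lambda>\<psi> \<sigma>. A (commutator B C \<psi>) \<sigma> + commutator A C (B \<psi>) \<sigma>)"
  by (simp add: commutator_def fun_eq_iff linear_op_diff)

lemma commutator_self: "commutator A A = (\<lambda>\<psi> \<sigma>. 0)"
  by (simp add: commutator_def fun_eq_iff)

lemma commutator_sum_left:
  assumes "linear_op C"
  shows "commutator (\<lambda>\<psi> \<sigma>. \<Sum>i\<in>I. T i \<psi> \<sigma>) C = (\<lambda>\<psi> \<sigma>. \<Sum>i\<in>I. commutator (T i) C \<psi> \<sigma>)"
proof (intro ext)
  fix \<psi> \<sigma>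
  have "C (\<lambda>\<sigma>. \<Sum>i\<in>I. T i \<psi> \<sigma>) = (\<lambda>\<sigma>. \<Sum>i\<in>I. C (T i \<psi>) \<sigma>)"
    using linear_op_sum[OF assms, of "\<lambda>_. 1" "\<lambda>i. T i \<psi>" I] by simp
  then show "commutator (\<lambda>\<psi> \<sigma>. \<Sum>i\<in>I. T i \<psi> \<sigma>) C \<psi> \<sigma> = (\<Sum>i\<in>I. commutator (T i) C \<psi> \<sigma>)"
    by (simp add: commutator_def sum_subtractf)
qed

lemma commutator_sum_right:
  assumes "linear_op A"
  shows "commutator A (\<lambda>\<psi> \<sigma>. \<Sum>i\<in>I. c i * B i \<psi> \<sigma>) = (\<lambda>\<psi> \<sigma>. \<Sum>i\<in>I. c i * commutator A (B i) \<psi> \<sigma>)"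
proof (intro ext)
  fix \<psi> \<sigma>
  have "A (\<lambda>\<sigma>. \<Sum>i\<in>I. c i * B i \<psi> \<sigma>) = (\<lambda>\<sigma>. \<Sum>i\<in>I. c i * A (B i \<psi>) \<sigma>)"
    by (rule linear_op_sum[OF assms])
  then show "commutator A (\<lambda>\<psi> \<sigma>. \<Sum>i\<in>I. c i * B i \<psi> \<sigma>) \<psi> \<sigma> =
      (\<Sum>i\<in>I. c i * commutator A (B i) \<psi> \<sigma>)"
    by (simp add: commutator_def right_diff_distrib sum_subtractf)
qed

lemma eigenvector_ladder:
  assumes "linear_op P" and "commutator (commutator H P) P = (\<lambda>\<psi> \<sigma>. 0)"
    and "H \<Omega> = (\<lambda>\<sigma>. E * \<Omega> \<sigma>)" and "commutator H P \<Omega> = (\<lambda>\<sigma>. c * P \<Omega> \<sigma>)"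
  shows "H ((P ^^ n) \<Omega>) = (\<lambda>\<sigma>. (E + of_nat n * c) * (P ^^ n) \<Omega> \<sigma>)"
proof -
  let ?C = "commutator H P"
  have comm_C_P: "?C (P \<psi>) = P (?C \<psi>)" for \<psi>
    using fun_cong[OF fun_cong[OF assms(2), of \<psi>]] by (auto simp: commutator_def[of ?C])
  have C_power: "?C ((P ^^ n) \<Omega>) = (\<lambda>\<sigma>. c * (P ^^ Suc n) \<Omega> \<sigma>)" for n
    by (induction n) (simp_all add: assms(4) comm_C_P linear_op_scale[OF assms(1)])
  show ?thesis
  proof (induction n)
    case (Suc n)
    have "H ((P ^^ Suc n) \<Omega>) = (\<lambda>\<sigma>. P (H ((P ^^ n) \<Omega>)) \<sigma> + ?C ((P ^^ n) \<Omega>) \<sigma>)"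
      by (simp add: commutator_def)
    also have "\<dots> = (\<lambda>\<sigma>. (E + of_nat (Suc n) * c) * (P ^^ Suc n) \<Omega> \<sigma>)"
      unfolding Suc C_power linear_op_scale[OF assms(1)] by (simp add: algebra_simps)
    finally show ?case .
  qed (simp add: assms(3))
qed

section \<open>The lattice\<close>

abbreviation spins :: "int set" where "spins \<equiv> {-1, 0, 1}"

lemma sites_eq_lists: "sites L D = {xs. set xs \<subseteq> {..<L} \<and> length xs = D}"
  by (auto simp: sites_def in_set_conv_nth) (meson lessThan_iff nth_mem subsetD)

lemma finite_sites: "finite (sites L D)"
  unfolding sites_eq_lists by (rule finite_lists_length_eq) simp

lemma card_sites: "card (sites L D) = L ^ D"
  unfolding sites_eq_lists by (subst card_lists_length_eq) simp_all

lemma finite_configs: "finite (configs L D)"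
proof -
  have "configs L D \<subseteq>
      {f. \<forall>x. (x \<in> sites L D \<longrightarrow> f x \<in> spins) \<and> (x \<notin> sites L D \<longrightarrow> f x = 0)}"
    by (auto simp: configs_def)
  then show ?thesis
    by (rule finite_subset) (rule finite_set_of_finite_funs[OF finite_sites], simp)
qed

lemma configs_fun_upd:
  "\<sigma> \<in> configs L D \<Longrightarrow> r \<in> sites L D \<Longrightarrow> m \<in> spins \<Longrightarrow> \<sigma>(r := m) \<in> configs L D"
  by (auto simp: configs_def)

lemma adjacent_neq:
  assumes "even L" "L > 0" and "adjacent L D r r'" and "r \<in> sites L D"
  shows "r \<noteq> r'"
proof
  assume "r = r'"
  from assms(3) obtain \<mu> where "\<mu> < D"
    and "r' ! \<mu> = (r ! \<mu> + 1) mod L \<or> r ! \<mu> = (r' ! \<mu> + 1) mod L"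
    by (auto simp: adjacent_def)
  moreover have "r ! \<mu> < L" using assms(4) \<open>\<mu> < D\<close> by (simp add: sites_def)
  moreover have "2 \<le> L" using assms(1,2) by presburger
  ultimately show False using \<open>r = r'\<close> by (cases "r ! \<mu> + 1 < L") (auto simp: mod_if)
qed

lemma even_Suc_mod_iff: "even L \<Longrightarrow> x < L \<Longrightarrow> even (Suc x mod L) \<longleftrightarrow> odd (x::nat)"
proof (cases "Suc x < L")
  case False
  moreover assume "even L" "x < L"
  ultimately have "Suc x = L" by simp
  then show ?thesis using \<open>even L\<close> by auto
qed simp

lemma adjacent_parity:
  assumes "even L" and r: "r \<in> sites L D" and r': "r' \<in> sites L D" and "adjacent L D r r'"
  shows "even (sum_list r') \<longleftrightarrow> odd (sum_list r)"
proof -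
  from assms(4) obtain \<mu> where \<mu>: "\<mu> < D" "\<forall>\<nu><D. \<nu> \<noteq> \<mu> \<longrightarrow> r ! \<nu> = r' ! \<nu>"
    "r' ! \<mu> = (r ! \<mu> + 1) mod L \<or> r ! \<mu> = (r' ! \<mu> + 1) mod L"
    by (auto simp: adjacent_def)
  let ?R = "{..<D} - {\<mu>}"
  have split: "sum_list x = x ! \<mu> + (\<Sum>i\<in>?R. x ! i)" if "x \<in> sites L D" for x
  proof -
    have "sum_list x = (\<Sum>i<D. x ! i)"
      using that by (simp add: sites_def sum_list_sum_nth atLeast0LessThan)
    then show ?thesis using \<mu>(1) by (simp add: sum.remove)
  qed
  have "(\<Sum>i\<in>?R. r ! i) = (\<Sum>i\<in>?R. r' ! i)" using \<mu>(2) by (intro sum.cong) auto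
  moreover have "r ! \<mu> < L" "r' ! \<mu> < L" using r r' \<mu>(1) by (auto simp: sites_def)
  ultimately show ?thesis
    unfolding split[OF r] split[OF r'] using \<mu>(3) even_Suc_mod_iff[OF assms(1)] by auto
qed

section \<open>Single-site operators\<close>

lemma site_op_outside: "\<sigma> \<notin> configs L D \<Longrightarrow> site_op L D r A \<psi> \<sigma> = 0"
  by (simp add: site_op_def mat_op_def)

lemma site_op_apply:
  assumes \<sigma>: "\<sigma> \<in> configs L D" and r: "r \<in> sites L D"
  shows "site_op L D r A \<psi> \<sigma> = (\<Sum>m\<in>spins. A (\<sigma> r) m * \<psi> (\<sigma>(r := m)))"
proof -
  let ?G = "(\<lambda>m. \<sigma>(r := m)) ` spins"
  let ?f = "\<lambda>\<tau>. A (\<sigma> r) (\<tau> r) * (if \<forall>q. q \<noteq> r \<longrightarrow> \<sigma> q = \<tau> q then 1 else 0) * \<psi> \<tau>"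
  have G: "?G \<subseteq> configs L D" using configs_fun_upd[OF \<sigma> r] by auto
  have "site_op L D r A \<psi> \<sigma> = (\<Sum>\<tau>\<in>configs L D. ?f \<tau>)"
    using \<sigma> by (simp add: site_op_def mat_op_def)
  also have "\<dots> = (\<Sum>\<tau>\<in>?G. ?f \<tau>)"
  proof (rule sum.mono_neutral_right[OF finite_configs G], rule ballI)
    fix \<tau> assume \<tau>: "\<tau> \<in> configs L D - ?G"
    show "?f \<tau> = 0"
    proof (cases "\<forall>q. q \<noteq> r \<longrightarrow> \<sigma> q = \<tau> q")
      case True
      then have "\<tau> = \<sigma>(r := \<tau> r)" by (auto simp: fun_eq_iff)
      moreover have "\<tau> r \<in> spins" using \<tau> r by (auto simp: configs_def)
      ultimately show ?thesis using \<tau> by blast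
    qed auto
  qed
  also have "\<dots> = (\<Sum>m\<in>spins. A (\<sigma> r) m * \<psi> (\<sigma>(r := m)))"
  proof -
    have "inj_on (\<lambda>m. \<sigma>(r := m)) spins" by (auto simp: inj_on_def fun_eq_iff)
    then show ?thesis by (simp add: sum.reindex)
  qed
  finally show ?thesis .
qed

definition mat_mult :: "(int \<Rightarrow> int \<Rightarrow> complex) \<Rightarrow> (int \<Rightarrow> int \<Rightarrow> complex) \<Rightarrow> int \<Rightarrow> int \<Rightarrow> complex"
  where "mat_mult A B m m' = (\<Sum>k\<in>spins. A m k * B k m')"

definition mat_comm :: "(int \<Rightarrow> int \<Rightarrow> complex) \<Rightarrow> (int \<Rightarrow> int \<Rightarrow> complex) \<Rightarrow> int \<Rightarrow> int \<Rightarrow> complex"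
  where "mat_comm A B m m' = mat_mult A B m m' - mat_mult B A m m'"

lemma site_op_site_op_same:
  assumes "r \<in> sites L D"
  shows "site_op L D r A (site_op L D r B \<psi>) = site_op L D r (mat_mult A B) \<psi>"
proof
  fix \<sigma>
  show "site_op L D r A (site_op L D r B \<psi>) \<sigma> = site_op L D r (mat_mult A B) \<psi> \<sigma>"
    using assms
    by (cases "\<sigma> \<in> configs L D")
       (simp_all add: site_op_apply configs_fun_upd mat_mult_def algebra_simps site_op_outside)
qed

lemma site_op_commute:
  assumes "r \<in> sites L D" "r' \<in> sites L D" "r \<noteq> r'"
  shows "site_op L D r A (site_op L D r' B \<psi>) = site_op L D r' B (site_op L D r A \<psi>)"
proof
  fix \<sigma> :: cfg
  have "\<sigma>(r := m, r' := n) = \<sigma>(r' := n, r := m)" for m n using assms(3) by (rule fun_upd_twist)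
  then show "site_op L D r A (site_op L D r' B \<psi>) \<sigma> = site_op L D r' B (site_op L D r A \<psi>) \<sigma>"
    using assms
    by (cases "\<sigma> \<in> configs L D")
       (simp_all add: site_op_apply configs_fun_upd algebra_simps site_op_outside)
qed

lemma site_op_add:
  "site_op L D r A (\<lambda>\<sigma>. \<psi> \<sigma> + \<phi> \<sigma>) = (\<lambda>\<sigma>. site_op L D r A \<psi> \<sigma> + site_op L D r A \<phi> \<sigma>)"
  by (simp add: site_op_def mat_op_def fun_eq_iff algebra_simps sum.distrib)

lemma site_op_scale: "site_op L D r A (\<lambda>\<sigma>. c * \<psi> \<sigma>) = (\<lambda>\<sigma>. c * site_op L D r A \<psi> \<sigma>)"
  by (simp add: site_op_def mat_op_def fun_eq_iff algebra_simps sum_distrib_left)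

lemma site_op_mat_add:
  "site_op L D r (\<lambda>m m'. A m m' + B m m') \<psi> = (\<lambda>\<sigma>. site_op L D r A \<psi> \<sigma> + site_op L D r B \<psi> \<sigma>)"
  by (simp add: site_op_def mat_op_def fun_eq_iff algebra_simps sum.distrib)

lemma site_op_mat_scale: "site_op L D r (\<lambda>m m'. c * A m m') \<psi> = (\<lambda>\<sigma>. c * site_op L D r A \<psi> \<sigma>)"
  by (simp add: site_op_def mat_op_def fun_eq_iff algebra_simps sum_distrib_left)

lemma site_op_mat_comm:
  "site_op L D r (mat_comm A B) \<psi> =
    (\<lambda>\<sigma>. site_op L D r (mat_mult A B) \<psi> \<sigma> - site_op L D r (mat_mult B A) \<psi> \<sigma>)"
  by (simp add: mat_comm_def site_op_def mat_op_def fun_eq_iff algebra_simps sum_subtractf)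

lemma commutator_site_op_same:
  "r \<in> sites L D \<Longrightarrow> commutator (site_op L D r A) (site_op L D r B) = site_op L D r (mat_comm A B)"
  by (simp add: commutator_def fun_eq_iff site_op_site_op_same site_op_mat_comm)

lemma commutator_site_op_distinct:
  "r \<in> sites L D \<Longrightarrow> r' \<in> sites L D \<Longrightarrow> r \<noteq> r' \<Longrightarrow>
    commutator (site_op L D r A) (site_op L D r' B) = (\<lambda>\<psi> \<sigma>. 0)"
  by (simp add: commutator_def fun_eq_iff site_op_commute)

lemma site_op_mat_zero: "site_op L D r (\<lambda>m m'. 0) = (\<lambda>\<psi> \<sigma>. 0)"
  by (simp add: site_op_def mat_op_def fun_eq_iff)

lemma linear_op_site_op: "linear_op (site_op L D r A)"
  by (simp add: linear_op_def site_op_add site_op_scale)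

section \<open>Spin-1 matrices\<close>

abbreviation inv_sqrt2 :: complex where "inv_sqrt2 \<equiv> complex_of_real (1 / sqrt 2)"

lemma sqrt2_sq_complex: "complex_of_real (sqrt 2) * complex_of_real (sqrt 2) = 2"
  by (simp flip: of_real_mult)

definition Splus_sq :: "int \<Rightarrow> int \<Rightarrow> complex" where "Splus_sq = mat_mult Splus Splus"

lemma Splus_eq: "Splus m m' = (if m \<in> spins \<and> m' \<in> spins \<and> m = m' + 1 then 2 * inv_sqrt2 else 0)"
  by (auto simp: Splus_def Sx_def Sy_def)

lemma Splus_sq_eq: "Splus_sq m m' = (if m = 1 \<and> m' = -1 then 2 else 0)"
  by (auto simp: Splus_sq_def mat_mult_def Splus_eq sqrt2_sq_complex)

lemma mat_comm_Sx_Splus_sq_eq: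
  "mat_comm Sx Splus_sq m m' =
    (if m = 0 \<and> m' = -1 then 2 * inv_sqrt2 else if m = 1 \<and> m' = 0 then - 2 * inv_sqrt2 else 0)"
  by (auto simp: mat_comm_def mat_mult_def Splus_sq_eq Sx_def)

lemma mat_comm_Sy_Splus_sq: "mat_comm Sy Splus_sq = (\<lambda>m m'. \<i> * mat_comm Sx Splus_sq m m')"
  by (auto simp: fun_eq_iff mat_comm_Sx_Splus_sq_eq mat_comm_def[of Sy]
      mat_mult_def Splus_sq_eq Sy_def)

lemma mat_comm_Sz_Splus_sq: "mat_comm Sz Splus_sq = (\<lambda>m m'. 2 * Splus_sq m m')"
  by (auto simp: fun_eq_iff mat_comm_def mat_mult_def Splus_sq_eq Sz_def)

lemma mat_comm_Sz_sq_Splus_sq: "mat_comm (mat_mult Sz Sz) Splus_sq = (\<lambda>m m'. 0)"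
  by (auto simp: fun_eq_iff mat_comm_def mat_mult_def Splus_sq_eq Sz_def)

lemma mat_comm_Splus_Splus_sq: "mat_comm Splus Splus_sq = (\<lambda>m m'. 0)"
  by (auto simp: fun_eq_iff mat_comm_def mat_mult_def Splus_sq_eq Splus_eq)

lemma mat_comm_Sx_Splus_sq_Splus_sq: "mat_comm (mat_comm Sx Splus_sq) Splus_sq = (\<lambda>m m'. 0)"
  by (auto simp: fun_eq_iff mat_comm_def[of "mat_comm Sx Splus_sq"]
      mat_mult_def Splus_sq_eq mat_comm_Sx_Splus_sq_eq)

section \<open>The staggered pair-raising operator\<close>

definition pair_raise :: "nat \<Rightarrow> nat \<Rightarrow> nat list \<Rightarrow> oper" where
  "pair_raise L D q = site_op L D q Splus_sq"

definition stagger_sign :: "nat list \<Rightarrow> complex" where "stagger_sign q = (-1) ^ sum_list q"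

lemma Px_eq: "Px L D = (\<lambda>\<psi> \<sigma>. \<Sum>q\<in>sites L D. stagger_sign q * pair_raise L D q \<psi> \<sigma>)"
  unfolding Px_def pair_raise_def stagger_sign_def Splus_sq_def
  by (intro ext sum.cong refl) (simp add: site_op_site_op_same)

lemma linear_op_Px: "linear_op (Px L D)"
  unfolding Px_eq pair_raise_def by (rule linear_op_sum_ops) (rule linear_op_site_op)

lemma stagger_sign_adjacent:
  "even L \<Longrightarrow> r \<in> sites L D \<Longrightarrow> r' \<in> sites L D \<Longrightarrow> adjacent L D r r' \<Longrightarrow>
    stagger_sign r' = - stagger_sign r"
  using adjacent_parity by (auto simp: stagger_sign_def minus_one_power_iff)

lemma commutator_Px:
  "linear_op A \<Longrightarrow> commutator A (Px L D) =
     (\<lambda>\<psi> \<sigma>. \<Sum>q\<in>sites L D. stagger_sign q * commutator A (pair_raise L D q) \<psi> \<sigma>)"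
  unfolding Px_eq by (rule commutator_sum_right)

lemma commutator_site_op_pair_raise:
  assumes "r \<in> sites L D" "q \<in> sites L D"
  shows "commutator (site_op L D r A) (pair_raise L D q) =
    (if q = r then site_op L D r (mat_comm A Splus_sq) else (\<lambda>\<psi> \<sigma>. 0))"
  using assms by (simp add: pair_raise_def commutator_site_op_same commutator_site_op_distinct)

lemma commutator_site_op_Px:
  assumes "r \<in> sites L D"
  shows "commutator (site_op L D r A) (Px L D) =
    (\<lambda>\<psi> \<sigma>. stagger_sign r * site_op L D r (mat_comm A Splus_sq) \<psi> \<sigma>)"
proof (intro ext)
  fix \<psi> \<sigma>
  have "commutator (site_op L D r A) (Px L D) \<psi> \<sigma> = (\<Sum>q\<in>sites L D.
      if q = r then stagger_sign r * site_op L D r (mat_comm A Splus_sq) \<psi> \<sigma> else 0)"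
    unfolding commutator_Px[OF linear_op_site_op]
    by (rule sum.cong) (simp_all add: assms commutator_site_op_pair_raise)
  then show "commutator (site_op L D r A) (Px L D) \<psi> \<sigma> =
      stagger_sign r * site_op L D r (mat_comm A Splus_sq) \<psi> \<sigma>"
    using assms by (simp add: finite_sites)
qed

section \<open>The Hamiltonian\<close>

definition bond :: "nat \<Rightarrow> nat \<Rightarrow> nat list \<Rightarrow> nat list \<Rightarrow> oper" where
  "bond L D r r' = (\<lambda>\<psi> \<sigma>. site_op L D r Sx (site_op L D r' Sx \<psi>) \<sigma>
                         + site_op L D r Sy (site_op L D r' Sy \<psi>) \<sigma>)"

text \<open>\<open>bond_comm L D r r'\<close> is \<open>[bond L D r r', pair_raise L D r]\<close>: the \<open>S\<^sup>x\<close> and \<open>S\<^sup>y\<close>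
  parts combine via \<open>[S\<^sup>y, (S\<^sup>+)\<^sup>2] = i [S\<^sup>x, (S\<^sup>+)\<^sup>2]\<close> into \<open>S\<^sup>x + i S\<^sup>y = S\<^sup>+\<close> on \<open>r'\<close>.\<close>

definition bond_comm :: "nat \<Rightarrow> nat \<Rightarrow> nat list \<Rightarrow> nat list \<Rightarrow> oper" where
  "bond_comm L D r r' \<psi> = site_op L D r (mat_comm Sx Splus_sq) (site_op L D r' Splus \<psi>)"

lemma site_op_Sx_add_Sy:
  "(\<lambda>\<sigma>. site_op L D r Sx \<psi> \<sigma> + \<i> * site_op L D r Sy \<psi> \<sigma>) = site_op L D r Splus \<psi>"
  unfolding Splus_def site_op_mat_add site_op_mat_scale ..

lemma commutator_bond_Px:
  assumes r: "r \<in> sites L D" and r': "r' \<in> sites L D" and "r \<noteq> r'"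
  shows "commutator (bond L D r r') (Px L D) =
    (\<lambda>\<psi> \<sigma>. stagger_sign r * bond_comm L D r r' \<psi> \<sigma> + stagger_sign r' * bond_comm L D r' r \<psi> \<sigma>)"
proof (intro ext)
  fix \<psi> \<sigma>
  let ?K = "mat_comm Sx Splus_sq"
  have commute: "site_op L D r A (site_op L D r' B \<phi>) = site_op L D r' B (site_op L D r A \<phi>)"
    for A B \<phi> using site_op_commute[OF r r' \<open>r \<noteq> r'\<close>] .
  have "commutator (bond L D r r') (Px L D) \<psi> \<sigma> =
      stagger_sign r' * (site_op L D r Sx (site_op L D r' ?K \<psi>) \<sigma>
                         + \<i> * site_op L D r Sy (site_op L D r' ?K \<psi>) \<sigma>)
    + stagger_sign r * (site_op L D r ?K (site_op L D r' Sx \<psi>) \<sigma>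
                         + \<i> * site_op L D r ?K (site_op L D r' Sy \<psi>) \<sigma>)"
    unfolding bond_def
    by (simp add: commutator_add_left commutator_comp_left linear_op_Px linear_op_site_op
        commutator_site_op_Px r r' mat_comm_Sy_Splus_sq site_op_mat_scale site_op_scale
        algebra_simps)
  also have "\<dots> = stagger_sign r' * site_op L D r Splus (site_op L D r' ?K \<psi>) \<sigma>
      + stagger_sign r * site_op L D r ?K (site_op L D r' Splus \<psi>) \<sigma>"
    by (simp flip: site_op_Sx_add_Sy add: site_op_add site_op_scale)
  finally show "commutator (bond L D r r') (Px L D) \<psi> \<sigma> =
      stagger_sign r * bond_comm L D r r' \<psi> \<sigma> + stagger_sign r' * bond_comm L D r' r \<psi> \<sigma>"
    by (simp add: bond_comm_def commute)
qed

lemma commutator_bond_comm_Px: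
  assumes r: "r \<in> sites L D" and r': "r' \<in> sites L D"
  shows "commutator (bond_comm L D r r') (Px L D) = (\<lambda>\<psi> \<sigma>. 0)"
  unfolding bond_comm_def
  by (simp add: commutator_comp_left linear_op_site_op commutator_site_op_Px r r'
      mat_comm_Sx_Splus_sq_Splus_sq mat_comm_Splus_Splus_sq site_op_mat_zero linear_op_zero)

definition hopping :: "nat \<Rightarrow> nat \<Rightarrow> oper" where
  "hopping L D = (\<lambda>\<psi> \<sigma>. \<Sum>r\<in>sites L D. \<Sum>r'\<in>{r'\<in>sites L D. adjacent L D r r'}. bond L D r r' \<psi> \<sigma>)"

definition zeeman :: "nat \<Rightarrow> nat \<Rightarrow> oper" where
  "zeeman L D = (\<lambda>\<psi> \<sigma>. \<Sum>r\<in>sites L D. site_op L D r Sz \<psi> \<sigma>)"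

definition anisotropy :: "nat \<Rightarrow> nat \<Rightarrow> oper" where
  "anisotropy L D = (\<lambda>\<psi> \<sigma>. \<Sum>r\<in>sites L D. site_op L D r (mat_mult Sz Sz) \<psi> \<sigma>)"

lemma Hx_eq: "Hx L D J h Delta = (\<lambda>\<psi> \<sigma>. complex_of_real J * (1/2) * hopping L D \<psi> \<sigma>
    + complex_of_real h * zeeman L D \<psi> \<sigma> + complex_of_real Delta * anisotropy L D \<psi> \<sigma>)"
  unfolding hopping_def zeeman_def anisotropy_def bond_def
  by (intro ext) (simp add: Hx_def site_op_site_op_same cong: sum.cong)

lemma commutator_zeeman_Px: "commutator (zeeman L D) (Px L D) = (\<lambda>\<psi> \<sigma>. 2 * Px L D \<psi> \<sigma>)"
  unfolding zeeman_def commutator_sum_left[OF linear_op_Px]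
  by (simp add: commutator_site_op_Px mat_comm_Sz_Splus_sq site_op_mat_scale cong: sum.cong)
     (simp add: Px_eq pair_raise_def sum_distrib_left algebra_simps)

lemma commutator_anisotropy_Px: "commutator (anisotropy L D) (Px L D) = (\<lambda>\<psi> \<sigma>. 0)"
  unfolding anisotropy_def
  by (simp add: commutator_sum_left linear_op_Px commutator_site_op_Px mat_comm_Sz_sq_Splus_sq
      site_op_mat_zero)

lemma commutator_hopping_Px:
  assumes "even L" "L > 0"
  shows "commutator (hopping L D) (Px L D) = (\<lambda>\<psi> \<sigma>.
    \<Sum>r\<in>sites L D. \<Sum>r'\<in>{r'\<in>sites L D. adjacent L D r r'}.
      stagger_sign r * bond_comm L D r r' \<psi> \<sigma> + stagger_sign r' * bond_comm L D r' r \<psi> \<sigma>)"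
  unfolding hopping_def commutator_sum_left[OF linear_op_Px]
  by (intro ext sum.cong refl) (auto simp: commutator_bond_Px dest: adjacent_neq[OF assms])

lemma commutator_commutator_hopping_Px:
  assumes "even L" "L > 0"
  shows "commutator (commutator (hopping L D) (Px L D)) (Px L D) = (\<lambda>\<psi> \<sigma>. 0)"
  unfolding commutator_hopping_Px[OF assms]
  by (simp add: commutator_sum_left commutator_add_left commutator_scale_left linear_op_Px
      commutator_bond_comm_Px)

lemma commutator_Hx_Px:
  "commutator (Hx L D J h Delta) (Px L D) = (\<lambda>\<psi> \<sigma>.
     complex_of_real J * (1/2) * commutator (hopping L D) (Px L D) \<psi> \<sigma>
     + 2 * complex_of_real h * Px L D \<psi> \<sigma>)"
  unfolding Hx_eq commutator_add_left[OF linear_op_Px] commutator_scale_left[OF linear_op_Px]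
    commutator_zeeman_Px commutator_anisotropy_Px
  by (simp add: mult.assoc mult.left_commute)

lemma commutator_commutator_Hx_Px:
  assumes "even L" "L > 0"
  shows "commutator (commutator (Hx L D J h Delta) (Px L D)) (Px L D) = (\<lambda>\<psi> \<sigma>. 0)"
  unfolding commutator_Hx_Px commutator_add_left[OF linear_op_Px]
    commutator_scale_left[OF linear_op_Px] commutator_commutator_hopping_Px[OF assms]
    commutator_self
  by simp

section \<open>The fully polarised state\<close>

definition basis_state :: "cfg \<Rightarrow> state" where "basis_state \<tau> = (\<lambda>\<sigma>. if \<sigma> = \<tau> then 1 else 0)"

definition all_down :: "nat \<Rightarrow> nat \<Rightarrow> cfg" where
  "all_down L D = (\<lambda>r. if r \<in> sites L D then -1 else 0)"

lemma Omega_eq: "Omega L D = basis_state (all_down L D)"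
  by (simp add: Omega_def basis_state_def all_down_def)

lemma all_down_in_configs: "all_down L D \<in> configs L D"
  by (simp add: all_down_def configs_def)

lemma all_down_apply: "r \<in> sites L D \<Longrightarrow> all_down L D r = -1"
  by (simp add: all_down_def)

lemma site_op_basis_state:
  assumes \<tau>: "\<tau> \<in> configs L D" and r: "r \<in> sites L D"
  shows "site_op L D r A (basis_state \<tau>) = (\<lambda>\<sigma>. \<Sum>m\<in>spins. A m (\<tau> r) * basis_state (\<tau>(r := m)) \<sigma>)"
proof
  fix \<sigma>
  show "site_op L D r A (basis_state \<tau>) \<sigma> = (\<Sum>m\<in>spins. A m (\<tau> r) * basis_state (\<tau>(r := m)) \<sigma>)"
  proof (cases "\<sigma> \<in> configs L D")
    case False
    then have "\<tau>(r := m) \<noteq> \<sigma>" if "m \<in> spins" for m using configs_fun_upd[OF \<tau> r that] by blast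
    then have "(\<Sum>m\<in>spins. A m (\<tau> r) * basis_state (\<tau>(r := m)) \<sigma>) = 0"
      by (intro sum.neutral) (auto simp: basis_state_def)
    then show ?thesis using False by (simp add: site_op_outside)
  next
    case True
    show ?thesis
    proof (cases "\<forall>q. q \<noteq> r \<longrightarrow> \<sigma> q = \<tau> q")
      case agree: True
      have spins: "\<tau> r \<in> spins" "\<sigma> r \<in> spins" using \<tau> True r by (auto simp: configs_def)
      have upd_\<sigma>: "\<sigma>(r := m) = \<tau> \<longleftrightarrow> m = \<tau> r" and upd_\<tau>: "\<sigma> = \<tau>(r := m) \<longleftrightarrow> m = \<sigma> r" for m
        using agree by (auto simp: fun_eq_iff)
      have "site_op L D r A (basis_state \<tau>) \<sigma> = (\<Sum>m\<in>spins. if m = \<tau> r then A (\<sigma> r) m else 0)"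
        using True r by (simp add: site_op_apply basis_state_def upd_\<sigma> if_distrib cong: if_cong)
      also have "\<dots> = (\<Sum>m\<in>spins. if m = \<sigma> r then A m (\<tau> r) else 0)"
        using spins by (simp only: sum.delta finite.emptyI finite_insert)
      also have "\<dots> = (\<Sum>m\<in>spins. A m (\<tau> r) * basis_state (\<tau>(r := m)) \<sigma>)"
        by (rule sum.cong) (auto simp: basis_state_def upd_\<tau>)
      finally show ?thesis .
    next
      case False
      then obtain q where "q \<noteq> r" "\<sigma> q \<noteq> \<tau> q" by blast
      then have "\<sigma>(r := m) \<noteq> \<tau>" "\<sigma> \<noteq> \<tau>(r := m)" for m by (auto simp: fun_eq_iff)
      then show ?thesis using True r by (simp add: site_op_apply basis_state_def)
    qed
  qed
qed

lemma all_down_upd_in_configs: "r \<in> sites L D \<Longrightarrow> (all_down L D)(r := 0) \<in> configs L D"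
  by (rule configs_fun_upd[OF all_down_in_configs]) auto

lemma site_op_Sz_all_down:
  assumes "r \<in> sites L D"
  shows "site_op L D r Sz (basis_state (all_down L D)) = (\<lambda>\<sigma>. - basis_state (all_down L D) \<sigma>)"
proof -
  have "(all_down L D)(r := -1) = all_down L D" using all_down_apply[OF assms] by auto
  then show ?thesis
    using assms by (simp add: site_op_basis_state all_down_in_configs all_down_apply Sz_def)
qed

lemma site_op_Sz_sq_all_down:
  "r \<in> sites L D \<Longrightarrow>
    site_op L D r (mat_mult Sz Sz) (basis_state (all_down L D)) = basis_state (all_down L D)"
  using site_op_scale[of L D r Sz "-1"]
  by (simp flip: site_op_site_op_same add: site_op_Sz_all_down)

lemma bond_all_down:
  assumes r: "r \<in> sites L D" and r': "r' \<in> sites L D" and "r \<noteq> r'"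
  shows "bond L D r r' (basis_state (all_down L D)) = (\<lambda>\<sigma>. 0)"
proof -
  let ?\<Omega> = "basis_state (all_down L D)" and ?\<Omega>' = "basis_state ((all_down L D)(r' := 0))"
  let ?\<Omega>'' = "basis_state ((all_down L D)(r' := 0, r := 0))"
  have first: "site_op L D r' Sx ?\<Omega> = (\<lambda>\<sigma>. inv_sqrt2 * ?\<Omega>' \<sigma>)"
    "site_op L D r' Sy ?\<Omega> = (\<lambda>\<sigma>. (- \<i> * inv_sqrt2) * ?\<Omega>' \<sigma>)"
    using r' by (simp_all add: site_op_basis_state all_down_in_configs all_down_apply Sx_def Sy_def)
  have second: "site_op L D r Sx ?\<Omega>' = (\<lambda>\<sigma>. inv_sqrt2 * ?\<Omega>'' \<sigma>)"
    "site_op L D r Sy ?\<Omega>' = (\<lambda>\<sigma>. (- \<i> * inv_sqrt2) * ?\<Omega>'' \<sigma>)"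
    using assms
    by (simp_all add: site_op_basis_state all_down_upd_in_configs all_down_apply Sx_def Sy_def)
  show ?thesis
    unfolding bond_def first site_op_scale second
    by (simp add: fun_eq_iff algebra_simps sqrt2_sq_complex)
qed

lemma bond_comm_all_down:
  assumes r: "r \<in> sites L D" and r': "r' \<in> sites L D" and "r \<noteq> r'"
  shows "bond_comm L D r r' (basis_state (all_down L D)) =
    (\<lambda>\<sigma>. 2 * basis_state ((all_down L D)(r' := 0, r := 0)) \<sigma>)"
proof -
  have first: "site_op L D r' Splus (basis_state (all_down L D)) =
      (\<lambda>\<sigma>. (2 * inv_sqrt2) * basis_state ((all_down L D)(r' := 0)) \<sigma>)"
    using r' by (simp add: site_op_basis_state all_down_in_configs all_down_apply Splus_eq)
  have second: "site_op L D r (mat_comm Sx Splus_sq) (basis_state ((all_down L D)(r' := 0))) =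
      (\<lambda>\<sigma>. (2 * inv_sqrt2) * basis_state ((all_down L D)(r' := 0, r := 0)) \<sigma>)"
    using assms
    by (simp add: site_op_basis_state all_down_upd_in_configs all_down_apply
        mat_comm_Sx_Splus_sq_eq)
  show ?thesis
    unfolding bond_comm_def first site_op_scale second
    by (simp add: fun_eq_iff algebra_simps sqrt2_sq_complex)
qed

lemma Hx_Omega:
  assumes "even L" "L > 0"
  shows "Hx L D J h Delta (Omega L D) =
    (\<lambda>\<sigma>. complex_of_real ((Delta - h) * real L ^ D) * Omega L D \<sigma>)"
proof -
  let ?\<Omega> = "basis_state (all_down L D)"
  have "hopping L D ?\<Omega> = (\<lambda>\<sigma>. 0)"
    unfolding hopping_def
    by (intro ext sum.neutral ballI) (auto simp: bond_all_down dest: adjacent_neq[OF assms])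
  moreover have "zeeman L D ?\<Omega> = (\<lambda>\<sigma>. - of_nat (L ^ D) * ?\<Omega> \<sigma>)"
    by (simp add: zeeman_def site_op_Sz_all_down card_sites cong: sum.cong)
  moreover have "anisotropy L D ?\<Omega> = (\<lambda>\<sigma>. of_nat (L ^ D) * ?\<Omega> \<sigma>)"
    by (simp add: anisotropy_def site_op_Sz_sq_all_down card_sites cong: sum.cong)
  ultimately show ?thesis
    by (simp add: Hx_eq Omega_eq fun_eq_iff algebra_simps)
qed

lemma commutator_hopping_Px_Omega:
  assumes "even L" "L > 0"
  shows "commutator (hopping L D) (Px L D) (Omega L D) = (\<lambda>\<sigma>. 0)"
proof -
  have "stagger_sign r * bond_comm L D r r' (Omega L D) \<sigma>
      + stagger_sign r' * bond_comm L D r' r (Omega L D) \<sigma> = 0"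
    if r: "r \<in> sites L D" and r': "r' \<in> sites L D" and adj: "adjacent L D r r'" for r r' \<sigma>
  proof -
    have "r \<noteq> r'" using adjacent_neq[OF assms adj r] .
    then have "(all_down L D)(r' := 0, r := 0) = (all_down L D)(r := 0, r' := 0)"
      by (rule fun_upd_twist[symmetric])
    moreover have "stagger_sign r' = - stagger_sign r"
      using stagger_sign_adjacent[OF assms(1) r r' adj] .
    ultimately show ?thesis
      using bond_comm_all_down[OF r r' \<open>r \<noteq> r'\<close>] bond_comm_all_down[OF r' r] \<open>r \<noteq> r'\<close>
      by (simp add: Omega_eq)
  qed
  then show ?thesis
    unfolding commutator_hopping_Px[OF assms] by (intro ext sum.neutral ballI) auto
qed

lemma commutator_Hx_Px_Omega:
  assumes "even L" "L > 0"
  shows "commutator (Hx L D J h Delta) (Px L D) (Omega L D) =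
    (\<lambda>\<sigma>. 2 * complex_of_real h * Px L D (Omega L D) \<sigma>)"
  using commutator_hopping_Px_Omega[OF assms] by (simp add: commutator_Hx_Px)

theorem mainTheorem7:
  fixes L D :: nat and J h Delta :: real
  assumes "even L" and "L > 0"
  shows "(Hx L D J h Delta (Omega L D)
           = (\<lambda>\<sigma>. complex_of_real ((Delta - h) * real L ^ D) * Omega L D \<sigma>)) \<and>
     (commutator (Hx L D J h Delta) (Px L D) (Omega L D)
           = (\<lambda>\<sigma>. 2 * complex_of_real h * Px L D (Omega L D) \<sigma>)) \<and>
     (commutator (commutator (Hx L D J h Delta) (Px L D)) (Px L D) = (\<lambda>\<psi> \<sigma>. 0)) \<and>
     (\<forall>n::nat. Hx L D J h Delta ((Px L D ^^ n) (Omega L D))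
           = (\<lambda>\<sigma>. complex_of_real (h * (2 * real n - real L ^ D) + Delta * real L ^ D)
                    * (Px L D ^^ n) (Omega L D) \<sigma>))"
proof (intro conjI allI)
  show "Hx L D J h Delta ((Px L D ^^ n) (Omega L D))
      = (\<lambda>\<sigma>. complex_of_real (h * (2 * real n - real L ^ D) + Delta * real L ^ D)
               * (Px L D ^^ n) (Omega L D) \<sigma>)" for n
    using eigenvector_ladder[OF linear_op_Px commutator_commutator_Hx_Px[OF assms]
        Hx_Omega[OF assms] commutator_Hx_Px_Omega[OF assms], where n = n]
    by (simp add: algebra_simps)
qed (simp_all add: Hx_Omega commutator_Hx_Px_Omega commutator_commutator_Hx_Px assms)

end
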